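(* Let $q$ be a power of an odd prime and let $n$ be a positive integer with $\gcd\big(n,\frac{q-1}{2}\big)=1$. Then the number of elements $a\in\mathbb{F}_q$ for which the binomial $x^n\big(x^{\frac{q-1}{2}}+a\big)$ is a permutation polynomial of $\mathbb{F}_q$ equals $$\frac{q-2+(-1)^n}{2}.$$
   Context: A polynomial $f\in\mathbb{F}_q[x]$ is a permutation polynomial of $\mathbb{F}_q$ if the map $c\mapsto f(c)$ is a bijection of $\mathbb{F}_q$. *)

theory Defs
  imports "HOL-Computational_Algebra.Polynomial"
begin

definition permutation_polynomial :: "'a::field poly \<Rightarrow> bool" where
  "permutation_polynomial f \<longleftrightarrow> bij (poly f)"

end

theory Submission
  imports Defs "HOL-Library.Cardinality"
begin

text \<open>Let \<open>m = (q - 1) / 2\<close>. By Euler's criterion \<open>x\<^sup>m = \<plusminus>1\<close> for \<open>x \<noteq> 0\<close>, with \<open>+1\<close> exactly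
on the squares. On the nonzero \<open>x\<close> with \<open>x\<^sup>m = \<epsilon>\<close> the binomial equals \<open>(\<epsilon> + a) x\<^sup>n\<close>, and
since \<open>gcd n m = 1\<close> the map \<open>x \<mapsto> x\<^sup>n\<close> is injective on each of these two classes of size \<open>m\<close>.
The \<open>m\<close>-th powers of the values on the two classes are \<open>(a + 1)\<^sup>m\<close> and \<open>(-1)\<^sup>n (a - 1)\<^sup>m\<close>; if they
agree, \<open>2m\<close> nonzero points map into a set of size at most \<open>m\<close>, and if they differ the two images
are disjoint. So the binomial permutes the field iff \<open>a \<noteq> \<plusminus>1\<close> and
\<open>(a\<^sup>2 - 1)\<^sup>m = (-1)\<^sup>n\<^sup>+\<^sup>1\<close>. Finally the hyperbola \<open>a\<^sup>2 - b\<^sup>2 = 1\<close> has \<open>q - 1\<close> points, so \<open>a\<^sup>2 - 1\<close>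
is a nonzero square for \<open>(q - 3) / 2\<close> values of \<open>a\<close> and a nonsquare for \<open>(q - 1) / 2\<close> of them.\<close>

lemma card_uniform_fibres:
  assumes "finite X" "finite Y" "f ` X \<subseteq> Y"
    and "\<And>y. y \<in> Y \<Longrightarrow> card {x\<in>X. f x = y} = k"
  shows "card X = k * card Y"
proof -
  have "X = (\<Union>y\<in>Y. {x\<in>X. f x = y})" using assms(3) by blast
  then have "card X = card (\<Union>y\<in>Y. {x\<in>X. f x = y})" by simp
  also have "\<dots> = (\<Sum>y\<in>Y. card {x\<in>X. f x = y})"
    using assms(1,2) by (intro card_UN_disjoint) auto
  finally show ?thesis using assms(4) by simp
qed

lemma card_power_eq_le:
  fixes c :: "'a::field"
  assumes "m > 0"
  shows "card {x. x ^ m = c} \<le> m"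
proof -
  let ?p = "monom 1 m + [:-c:]"
  have deg: "degree ?p = m"
    using assms by (simp add: degree_add_eq_left degree_monom_eq)
  then have "card {x. poly ?p x = 0} \<le> m"
    using assms card_poly_roots_bound[of ?p] by fastforce
  moreover have "{x. poly ?p x = 0} = {x. x ^ m = c}" by (auto simp: poly_monom)
  ultimately show ?thesis by simp
qed

lemma power_eq_imp_eq_if_coprime:
  fixes x y :: "'a::field"
  assumes "x ^ n = y ^ n" "x ^ m = y ^ m" "coprime n m" "n > 0" "y \<noteq> 0"
  shows "x = y"
proof -
  obtain s t where st: "n * s = m * t + 1"
    using bezout_nat[of n m] assms(3,4) by (auto simp: coprime_iff_gcd_eq_1)
  let ?z = "x / y"
  have "?z ^ n = 1" "?z ^ m = 1" using assms by (simp_all add: power_divide)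
  then have "?z ^ (n * s) = 1" "?z ^ (m * t + 1) = ?z" by (simp_all add: power_mult)
  then have "?z = 1" using st by simp
  then show ?thesis using assms(5) by simp
qed

lemma power_binomial_power:
  fixes x a :: "'a::comm_monoid_mult"
  shows "(x ^ n * a) ^ m = (x ^ m) ^ n * a ^ m"
  by (simp add: power_mult_distrib flip: power_mult) (simp add: mult.commute)

lemma power_square_minus_one:
  fixes a :: "'a::comm_ring_1"
  shows "(a ^ 2 - 1) ^ m = (a + 1) ^ m * (a - 1) ^ m"
  by (simp add: power2_eq_square algebra_simps flip: power_mult_distrib)

lemma of_nat_card_eq_0: "of_nat CARD('a) = (0::'a::{finite,field})"
proof -
  have "(\<Sum>y\<in>UNIV. y + 1) = (\<Sum>y\<in>UNIV. y :: 'a)"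
    by (rule sum.reindex_bij_witness[of _ "\<lambda>y. y - 1" "\<lambda>y. y + 1"]) auto
  then show ?thesis by (simp add: sum.distrib)
qed

lemma two_neq_zero_if_odd_card:
  assumes "odd CARD('a)"
  shows "(2::'a::{finite,field}) \<noteq> 0"
proof
  assume two: "(2::'a) = 0"
  obtain k where "CARD('a) = 2 * k + 1" using assms oddE by blast
  then have "(of_nat CARD('a) :: 'a) = 2 * of_nat k + 1" by simp
  also have "\<dots> = 1" using two by simp
  finally show False using of_nat_card_eq_0[where 'a='a] by simp
qed

lemma neq_neg_if_odd_card:
  fixes x :: "'a::{finite,field}"
  assumes "odd CARD('a)" "x \<noteq> 0"
  shows "x \<noteq> -x"
  using assms two_neq_zero_if_odd_card[OF assms(1)] by (simp add: eq_neg_iff_add_eq_0 mult_2[symmetric])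

lemma power_card_minus_one_eq_1:
  fixes x :: "'a::{finite,field}"
  assumes "x \<noteq> 0"
  shows "x ^ (CARD('a) - 1) = 1"
proof -
  have "(\<Prod>y\<in>UNIV - {0}. x * y) = (\<Prod>y\<in>UNIV - {0}. y)"
    by (rule prod.reindex_bij_witness[of _ "\<lambda>y. y / x" "\<lambda>y. x * y"]) (use assms in auto)
  then have "x ^ card (UNIV - {0::'a}) = 1" by (simp add: prod.distrib)
  then show ?thesis by (simp add: card_Diff_singleton)
qed

lemma card_eq_double_half_plus_one:
  assumes "odd CARD('a::{finite,field})" "m = (CARD('a) - 1) div 2"
  shows "CARD('a) = 2 * m + 1" "card (UNIV - {0::'a}) = 2 * m" "m > 0"
proof -
  have "card {0::'a, 1} \<le> CARD('a)" by (rule card_mono) auto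
  then have "CARD('a) \<ge> 2" by simp
  then show "CARD('a) = 2 * m + 1" "m > 0" using assms by presburger+
  then show "card (UNIV - {0::'a}) = 2 * m" by (simp add: card_Diff_singleton)
qed

lemma power_half_card_squared:
  fixes x :: "'a::{finite,field}"
  assumes "odd CARD('a)" "m = (CARD('a) - 1) div 2" "x \<noteq> 0"
  shows "(x ^ m) ^ 2 = 1"
proof -
  have "(x ^ m) ^ 2 = x ^ (CARD('a) - 1)"
    using card_eq_double_half_plus_one[OF assms(1,2)] by (simp add: power_mult[symmetric] mult.commute)
  then show ?thesis using power_card_minus_one_eq_1[OF assms(3)] by simp
qed

lemma power_half_card_eq_1_or_minus_1:
  fixes x :: "'a::{finite,field}"
  assumes "odd CARD('a)" "m = (CARD('a) - 1) div 2" "x \<noteq> 0"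
  shows "x ^ m = 1 \<or> x ^ m = -1"
  using power_half_card_squared[OF assms] power2_eq_1_iff by blast

lemma card_nonzero_squares:
  assumes "odd CARD('a::{finite,field})" "m = (CARD('a) - 1) div 2"
  shows "card {b ^ 2 | b::'a. b \<noteq> 0} = m"
proof -
  have "card (UNIV - {0::'a}) = 2 * card {b ^ 2 | b::'a. b \<noteq> 0}"
  proof (rule card_uniform_fibres[where f = "\<lambda>b. b ^ 2"])
    fix y assume "y \<in> {b ^ 2 | b::'a. b \<noteq> 0}"
    then obtain b where b: "b \<noteq> 0" "y = b ^ 2" by blast
    then have "{x \<in> UNIV - {0}. x ^ 2 = y} = {b, -b}" by (auto simp: power2_eq_iff)
    moreover have "b \<noteq> -b" using neq_neg_if_odd_card[OF assms(1) b(1)] .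
    ultimately show "card {x \<in> UNIV - {0}. x ^ 2 = y} = 2" by simp
  qed auto
  then show ?thesis using card_eq_double_half_plus_one[OF assms] by simp
qed

theorem euler_criterion:
  fixes x :: "'a::{finite,field}"
  assumes "odd CARD('a)" "m = (CARD('a) - 1) div 2" "x \<noteq> 0"
  shows "x ^ m = 1 \<longleftrightarrow> (\<exists>b. x = b ^ 2)"
proof -
  let ?S = "{b ^ 2 | b::'a. b \<noteq> 0}"
  have "?S \<subseteq> {x. x ^ m = 1}"
    using power_half_card_squared[OF assms(1,2)] by (auto simp: power_mult[symmetric] mult.commute)
  moreover have "card {x::'a. x ^ m = 1} \<le> card ?S"
    using card_power_eq_le card_eq_double_half_plus_one[OF assms(1,2)] card_nonzero_squares[OF assms(1,2)]
    by metis
  ultimately have "?S = {x. x ^ m = 1}" by (intro card_seteq) auto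
  then show ?thesis using assms(3) by auto
qed

lemma exists_power_half_card_eq_minus_1:
  assumes "odd CARD('a::{finite,field})" "m = (CARD('a) - 1) div 2"
  shows "\<exists>x::'a. x ^ m = -1"
proof (rule ccontr)
  assume "\<not> ?thesis"
  then have "UNIV - {0::'a} \<subseteq> {x. x ^ m = 1}"
    using power_half_card_eq_1_or_minus_1[OF assms] by blast
  then have "card (UNIV - {0::'a}) \<le> card {x::'a. x ^ m = 1}" by (intro card_mono) auto
  also have "\<dots> \<le> m" using card_power_eq_le card_eq_double_half_plus_one[OF assms] by blast
  finally show False using card_eq_double_half_plus_one[OF assms] by simp
qed

lemma card_hyperbola:
  assumes "odd CARD('a::{finite,field})"
  shows "card {(a::'a, b). a ^ 2 - b ^ 2 = 1} = CARD('a) - 1"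
proof -
  have two: "(2::'a) \<noteq> 0" using two_neq_zero_if_odd_card[OF assms] .
  then have four: "(4::'a) \<noteq> 0" by (metis mult_eq_0_iff numeral_Bit0_eq_double)
  let ?T = "{(u::'a, v). u * v = 1}"
  have "?T = (\<lambda>u. (u, inverse u)) ` (UNIV - {0})"
    by (auto simp: field_simps image_iff)
  then have "card ?T = card (UNIV - {0::'a})" by (simp add: card_image inj_on_def)
  also have "\<dots> = CARD('a) - 1" by (simp add: card_Diff_singleton)
  also have "card ?T = card {(a::'a, b). a ^ 2 - b ^ 2 = 1}"
  proof (rule bij_betw_same_card[of "\<lambda>(u, v). ((u + v) / 2, (v - u) / 2)"],
         rule bij_betw_byWitness[where f' = "\<lambda>(a, b). (a - b, a + b)"])
  qed (use two four in \<open>auto simp: field_simps power2_eq_square\<close>)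
  finally show ?thesis .
qed

lemma card_square_minus_one_nonzero_square:
  assumes "odd CARD('a::{finite,field})"
  shows "2 * card {a::'a. \<exists>b. b \<noteq> 0 \<and> a ^ 2 - 1 = b ^ 2} + 3 = CARD('a)"
proof -
  let ?H = "{(a::'a, b). a ^ 2 - b ^ 2 = 1}"
  let ?H' = "{(a::'a, b). b \<noteq> 0 \<and> a ^ 2 - b ^ 2 = 1}"
  let ?A = "{a::'a. \<exists>b. b \<noteq> 0 \<and> a ^ 2 - 1 = b ^ 2}"
  have "?H = ?H' \<union> {(1, 0), (-1, 0)}" by (auto simp: power2_eq_1_iff)
  moreover have "(1::'a) \<noteq> -1" using neq_neg_if_odd_card[OF assms one_neq_zero] .
  ultimately have "card ?H = card ?H' + 2" by (simp add: card_Un_disjoint)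
  then have H': "card ?H' + 3 = CARD('a)"
    using card_hyperbola[OF assms] card_eq_double_half_plus_one[OF assms refl] by linarith
  have "card ?H' = 2 * card ?A"
  proof (rule card_uniform_fibres[where f = fst])
    fix a assume "a \<in> ?A"
    then obtain b where b: "b \<noteq> 0" "a ^ 2 - 1 = b ^ 2" by blast
    then have "{x \<in> ?H'. fst x = a} = {(a, b), (a, -b)}"
      by (auto simp: algebra_simps power2_eq_iff)
    moreover have "b \<noteq> -b" using neq_neg_if_odd_card[OF assms b(1)] .
    ultimately show "card {x \<in> ?H'. fst x = a} = 2" by simp
  qed (auto simp: algebra_simps)
  then show ?thesis using H' by simp
qed

lemma card_square_minus_one_power_half_card:
  assumes "odd CARD('a::{finite,field})" "m = (CARD('a) - 1) div 2"
  shows "2 * card {a::'a. a \<noteq> 1 \<and> a \<noteq> -1 \<and> (a ^ 2 - 1) ^ m = 1} + 3 = CARD('a)"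
    and "2 * card {a::'a. a \<noteq> 1 \<and> a \<noteq> -1 \<and> (a ^ 2 - 1) ^ m = -1} + 1 = CARD('a)"
proof -
  have "(1::'a) \<noteq> -1" using neq_neg_if_odd_card[OF assms(1) one_neq_zero] .
  have nonzero: "a ^ 2 - 1 \<noteq> 0 \<longleftrightarrow> a \<noteq> 1 \<and> a \<noteq> -1" for a :: 'a
    using power2_eq_1_iff[of a] by simp
  let ?Q = "{a::'a. a \<noteq> 1 \<and> a \<noteq> -1}"
  let ?S = "{a::'a. \<exists>b. b \<noteq> 0 \<and> a ^ 2 - 1 = b ^ 2}"
  have "?Q = UNIV - {1, -1}" by auto
  then have card_Q: "card ?Q + 2 = CARD('a)"
    using \<open>1 \<noteq> -1\<close> card_eq_double_half_plus_one[OF assms] by (simp add: card_Diff_subset)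
  have square_iff: "(a ^ 2 - 1) ^ m = 1 \<longleftrightarrow> a \<in> ?S" if "a \<in> ?Q" for a
  proof -
    have "a ^ 2 - 1 \<noteq> 0" using that nonzero by blast
    moreover have "b \<noteq> 0" if "a ^ 2 - 1 = b ^ 2" for b
      using that \<open>a ^ 2 - 1 \<noteq> 0\<close> by auto
    ultimately show ?thesis using euler_criterion[OF assms, of "a ^ 2 - 1"] by auto
  qed
  have "?S \<subseteq> ?Q" by auto
  have "{a. a \<noteq> 1 \<and> a \<noteq> -1 \<and> (a ^ 2 - 1) ^ m = 1} = ?S"
    using square_iff \<open>?S \<subseteq> ?Q\<close> by blast
  then show "2 * card {a::'a. a \<noteq> 1 \<and> a \<noteq> -1 \<and> (a ^ 2 - 1) ^ m = 1} + 3 = CARD('a)"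
    using card_square_minus_one_nonzero_square[OF assms(1)] by simp
  have nonsquare_iff: "(a ^ 2 - 1) ^ m = -1 \<longleftrightarrow> a \<notin> ?S" if "a \<in> ?Q" for a
    using that square_iff[OF that] nonzero[of a] \<open>1 \<noteq> -1\<close>
      power_half_card_eq_1_or_minus_1[OF assms, of "a ^ 2 - 1"] by auto
  have "{a. a \<noteq> 1 \<and> a \<noteq> -1 \<and> (a ^ 2 - 1) ^ m = -1} = ?Q - ?S"
    using nonsquare_iff by blast
  with \<open>?S \<subseteq> ?Q\<close> show "2 * card {a::'a. a \<noteq> 1 \<and> a \<noteq> -1 \<and> (a ^ 2 - 1) ^ m = -1} + 1 = CARD('a)"
    using card_Q card_square_minus_one_nonzero_square[OF assms(1)] by (simp add: card_Diff_subset)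
qed

lemma bij_binomial_imp_criterion:
  fixes a :: "'a::{finite,field}"
  assumes "odd CARD('a)" "m = (CARD('a) - 1) div 2" "n > 0"
    and "bij (\<lambda>x::'a. x ^ n * (x ^ m + a))"
  shows "a \<noteq> 1 \<and> a \<noteq> -1 \<and> (a ^ 2 - 1) ^ m = (-1) ^ (n + 1)"
proof -
  let ?F = "\<lambda>x::'a. x ^ n * (x ^ m + a)"
  note card = card_eq_double_half_plus_one[OF assms(1,2)]
  note character = power_half_card_eq_1_or_minus_1[OF assms(1,2)]
  have inj: "inj ?F" using assms(4) by (simp add: bij_def)
  have a1: "a \<noteq> 1"
  proof
    assume "a = 1"
    obtain x :: 'a where x: "x ^ m = -1"
      using exists_power_half_card_eq_minus_1[OF assms(1,2)] by blast
    then have "?F x = ?F 0" using \<open>a = 1\<close> assms(3) by simp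
    then have "x = 0" by (rule injD[OF inj])
    then show False using x card(3) by (simp add: zero_power)
  qed
  have a2: "a \<noteq> -1"
  proof
    assume "a = -1"
    then have "?F 1 = ?F 0" using assms(3) by simp
    then have "(1::'a) = 0" by (rule injD[OF inj])
    then show False by simp
  qed
  have "(a ^ 2 - 1) ^ m \<noteq> (-1) ^ n"
  proof
    assume same: "(a ^ 2 - 1) ^ m = (-1) ^ n"
    have "a + 1 \<noteq> 0" "a - 1 \<noteq> 0" using a1 a2 eq_neg_iff_add_eq_0[of a 1] by auto
    have "(a + 1) ^ m * (a + 1) ^ m = 1"
      using power_half_card_squared[OF assms(1,2) \<open>a + 1 \<noteq> 0\<close>] by (simp add: power2_eq_square)
    then have "(-1) ^ n * (a - 1) ^ m = (-1) ^ n * (a - 1) ^ m * ((a + 1) ^ m * (a + 1) ^ m)"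
      by simp
    also have "\<dots> = (a + 1) ^ m * ((-1) ^ n * ((a + 1) ^ m * (a - 1) ^ m))"
      by (simp only: mult_ac)
    also have "\<dots> = (a + 1) ^ m"
      using same by (simp add: power_square_minus_one flip: power_add)
    finally have minus: "(-1) ^ n * (a - 1) ^ m = (a + 1) ^ m" .
    \<comment> \<open>so every nonzero value is an \<open>m\<close>-th root of \<open>(a + 1)\<^sup>m\<close>, leaving room for only \<open>m\<close> of the
      \<open>2m\<close> nonzero inputs\<close>
    have "?F x ^ m = (a + 1) ^ m" if "x \<noteq> 0" for x
      using character[OF that] minus by (auto simp: power_binomial_power add.commute)
    then have "?F ` (UNIV - {0}) \<subseteq> {y. y ^ m = (a + 1) ^ m}" by auto
    then have "card (UNIV - {0::'a}) \<le> card {y::'a. y ^ m = (a + 1) ^ m}"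
      using inj by (intro card_inj_on_le) (auto intro: inj_on_subset)
    also have "\<dots> \<le> m" using card_power_eq_le card(3) by blast
    finally show False using card(2,3) by simp
  qed
  moreover have "a ^ 2 - 1 \<noteq> 0" using a1 a2 power2_eq_1_iff[of a] by simp
  ultimately have "(a ^ 2 - 1) ^ m = - ((-1) ^ n)"
    using character[of "a ^ 2 - 1"] by (cases "even n") auto
  then show ?thesis using a1 a2 by simp
qed

lemma criterion_imp_bij_binomial:
  fixes a :: "'a::{finite,field}"
  assumes "odd CARD('a)" "m = (CARD('a) - 1) div 2" "n > 0" "coprime n m"
    and "a \<noteq> 1" "a \<noteq> -1" "(a ^ 2 - 1) ^ m = (-1) ^ (n + 1)"
  shows "bij (\<lambda>x::'a. x ^ n * (x ^ m + a))"
proof -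
  let ?F = "\<lambda>x::'a. x ^ n * (x ^ m + a)"
  note character = power_half_card_eq_1_or_minus_1[OF assms(1,2)]
  have "a + 1 \<noteq> 0" "a - 1 \<noteq> 0" using assms(5,6) eq_neg_iff_add_eq_0[of a 1] by auto
  then have shift_nonzero: "x ^ m + a \<noteq> 0" if "x \<noteq> 0" for x
    using character[OF that] by (auto simp: add.commute)
  have separated: "?F x \<noteq> ?F y" if "x ^ m = 1" "y ^ m = -1" for x y
  proof
    assume "?F x = ?F y"
    then have "?F x ^ m = ?F y ^ m" by simp
    then have "(a + 1) ^ m = (-1) ^ n * (a - 1) ^ m"
      using that by (simp add: power_binomial_power add.commute)
    then have "(a + 1) ^ m * (a - 1) ^ m = (-1) ^ n * ((a - 1) ^ m * (a - 1) ^ m)"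
      by (simp only: mult.assoc)
    then have "(a ^ 2 - 1) ^ m = (-1) ^ n * ((a - 1) ^ m) ^ 2"
      unfolding power_square_minus_one power2_eq_square[of "(a - 1) ^ m"] .
    then have "(a ^ 2 - 1) ^ m = (-1) ^ n"
      using power_half_card_squared[OF assms(1,2) \<open>a - 1 \<noteq> 0\<close>] by simp
    then have "(-1::'a) ^ n = - ((-1) ^ n)" using assms(7) by simp
    then show False using neq_neg_if_odd_card[OF assms(1), of "(-1) ^ n"] by simp
  qed
  have F_eq_0_iff: "?F x = 0 \<longleftrightarrow> x = 0" for x
    using shift_nonzero[of x] assms(3) by (cases "x = 0") (simp_all add: zero_power)
  have "inj ?F"
  proof (rule injI)
    fix x y assume eq: "?F x = ?F y"
    show "x = y"
    proof (cases "x = 0 \<or> y = 0")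
      case True
      then show ?thesis using eq F_eq_0_iff[of x] F_eq_0_iff[of y] by auto
    next
      case False
      then have "x ^ m = y ^ m"
        using character[of x] character[of y] separated[of x y] separated[of y x] eq by auto
      moreover have "x ^ n = y ^ n" using eq calculation shift_nonzero False by simp
      ultimately show ?thesis using power_eq_imp_eq_if_coprime assms(3,4) False by blast
    qed
  qed
  then show ?thesis by (simp add: bij_def finite_UNIV_inj_surj)
qed

theorem bij_binomial_iff:
  fixes a :: "'a::{finite,field}"
  assumes "odd CARD('a)" "m = (CARD('a) - 1) div 2" "n > 0" "coprime n m"
  shows "bij (\<lambda>x::'a. x ^ n * (x ^ m + a)) \<longleftrightarrow> a \<noteq> 1 \<and> a \<noteq> -1 \<and> (a ^ 2 - 1) ^ m = (-1) ^ (n + 1)"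
  using bij_binomial_imp_criterion[OF assms(1-3)] criterion_imp_bij_binomial[OF assms] by blast

theorem theorem3p2:
  fixes n :: nat
  assumes "odd (card (UNIV :: 'a::{finite,field} set))"
    and "n > 0"
    and "gcd n ((card (UNIV :: 'a set) - 1) div 2) = 1"
  shows "real (card {a :: 'a. permutation_polynomial
             ([:0, 1:] ^ n * ([:0, 1:] ^ ((card (UNIV :: 'a set) - 1) div 2) + [:a:]))})
         = (real (card (UNIV :: 'a set)) - 2 + (-1) ^ n) / 2"
proof -
  define m where "m = (CARD('a) - 1) div 2"
  have "coprime n m" using assms(3) by (simp add: m_def coprime_iff_gcd_eq_1)
  have "poly ([:0, 1:] ^ n * ([:0, 1:] ^ m + [:a:])) = (\<lambda>x. x ^ n * (x ^ m + a))" for a :: 'a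
    by (rule ext) simp
  then have "{a::'a. permutation_polynomial ([:0, 1:] ^ n * ([:0, 1:] ^ m + [:a:]))}
      = {a. a \<noteq> 1 \<and> a \<noteq> -1 \<and> (a ^ 2 - 1) ^ m = (-1) ^ (n + 1)}"
    using bij_binomial_iff[OF assms(1) m_def assms(2) \<open>coprime n m\<close>]
    by (simp add: permutation_polynomial_def)
  moreover have "2 * real (card {a::'a. a \<noteq> 1 \<and> a \<noteq> -1 \<and> (a ^ 2 - 1) ^ m = (-1) ^ (n + 1)})
      = real CARD('a) - 2 + (-1) ^ n"
  proof (cases "even n")
    case True
    then show ?thesis
      using card_square_minus_one_power_half_card(2)[OF assms(1) m_def] by simp
  next
    case False
    then show ?thesis
      using card_square_minus_one_power_half_card(1)[OF assms(1) m_def] by simp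
  qed
  ultimately show ?thesis unfolding m_def by simp
qed

end
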